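(* Let $I$ and $J$ be compositions of $n$ and let $W'(I,J)$ be the set of packed words $w$ with $\mathrm{WC}(w)=I$ and $\mathrm{DC}(w)=J$. Then the coefficient $D_I^J(q)$ of $\Psi_I$ in $R_J(q)$ is \[ D_I^J(q)=\sum_{w\in W'(I,J)}q^{\mathrm{sinv}(w)}. \]
   Context: Compositions: $I=(i_1,\dots,i_r)$ positive integers with sum $n$; $\ell(I)=r$; $\mathrm{Des}(I)$ the set of partial sums other than $n$; $J\succeq I$ ($J$ coarser) iff $\mathrm{Des}(J)\subseteq\mathrm{Des}(I)$. Over $\mathbb K(q)$ ($\mathrm{char}\,\mathbb K=0$): packed words are words with letter set $\{1,\dots,m\}$; $\mathrm{pack}$ replaces the $t$-th smallest letter by $t$. For a packed word $w=w_1\cdots w_n$: $\mathrm{DC}(w)$ is the composition of $n$ with descent set $\{i:w_i>w_{i+1}\}$; $\mathrm{WC}(w)$ is the composition of $n$ whose descent set is the set of positions $p<n$ with $w_p$ not occurring in $w_{p+1}\cdots w_n$; $\mathrm{sinv}(w)=\#\{i<j:w_i>w_j,\ w_j\text{ not occurring in }w_{j+1}\cdots w_n\}$. $\mathbf{WQSym}$ has basis $\mathbf M_u$ with $\mathbf M_{u'}\mathbf M_{u''}=\sum\mathbf M_u$ over packed $u=v\cdot w$ with $\mathrm{pack}(v)=u'$, $\mathrm{pack}(w)=u''$; $\mathbf M_{u'}\star_q\mathbf M_{u''}=\sum q^{\mathrm{sinv}(u)-\mathrm{sinv}(u')-\mathrm{sinv}(u'')}\mathbf M_u$ (associative). $\mathbf{Sym}$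 is the quotient by the span of $\mathbf M_u-\mathbf M_v$ with $\mathrm{WC}(u)=\mathrm{WC}(v)$, $\zeta$ the quotient map, $\Psi_I=\zeta(\mathbf M_u)$ for $\mathrm{WC}(u)=I$ (a basis). $\tilde S_m=\sum\mathbf M_u$ over nondecreasing packed $u$ of length $m$; $S^J(q)=\zeta(\tilde S_{j_1}\star_q\cdots\star_q\tilde S_{j_l})$; $R_I(q)=\sum_{J\succeq I}(-1)^{\ell(J)-\ell(I)}S^J(q)$. *)

theory Defs
  imports Main "HOL-Computational_Algebra.Polynomial" "HOL-Computational_Algebra.Fraction_Field"
begin

definition is_comp :: "nat \<Rightarrow> nat list \<Rightarrow> bool" where
  "is_comp n I \<longleftrightarrow> (\<forall>x\<in>set I. 0 < x) \<and> sum_list I = n"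

definition Des :: "nat list \<Rightarrow> nat set" where
  "Des I = {sum_list (take k I) | k. 0 < k \<and> k < length I}"

definition comp_of_set :: "nat \<Rightarrow> nat set \<Rightarrow> nat list" where
  "comp_of_set n D = (THE I. is_comp n I \<and> Des I = D)"

definition coarser :: "nat list \<Rightarrow> nat list \<Rightarrow> bool" where
  "coarser J I \<longleftrightarrow> Des J \<subseteq> Des I"

definition packed :: "nat list \<Rightarrow> bool" where
  "packed w \<longleftrightarrow> set w = {1..card (set w)}"

definition pack :: "nat list \<Rightarrow> nat list" where
  "pack w = map (\<lambda>x. card {y \<in> set w. y \<le> x}) w"

(* positions are 1-indexed: w_p = w ! (p - 1) *)
definition DC :: "nat list \<Rightarrow> nat list" where
  "DC w = comp_of_set (length w)
     {p. 1 \<le> p \<and> p < length w \<and> w ! (p - 1) > w ! p}"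

definition WC :: "nat list \<Rightarrow> nat list" where
  "WC w = comp_of_set (length w)
     {p. 1 \<le> p \<and> p < length w \<and> w ! (p - 1) \<notin> set (drop p w)}"

definition sinv :: "nat list \<Rightarrow> nat" where
  "sinv w = card {(i, j). i < j \<and> j < length w \<and> w ! i > w ! j
                         \<and> w ! j \<notin> set (drop (Suc j) w)}"

definition qX :: "'k::field_char_0 poly fract" where
  "qX = Fract [:0, 1:] 1"

(* elements of WQSym over K(q): coefficient functions u \<mapsto> coefficient of M_u
   (only values at packed words matter) *)
type_synonym 'k wqsym = "nat list \<Rightarrow> 'k poly fract"

(* bilinear extension of the q-product M_u' *_q M_u'' *)
definition qprod :: "'k::field_char_0 wqsym \<Rightarrow> 'k wqsym \<Rightarrow> 'k wqsym" where
  "qprod f g u = (if packed u then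
     (\<Sum>k\<in>{0..length u}. f (pack (take k u)) * g (pack (drop k u)) *
        qX powi (int (sinv u) - int (sinv (pack (take k u))) - int (sinv (pack (drop k u)))))
   else 0)"

definition wunit :: "'k::field_char_0 wqsym" where
  "wunit u = (if u = [] then 1 else 0)"

definition Stilde :: "nat \<Rightarrow> 'k::field_char_0 wqsym" where
  "Stilde m u = (if packed u \<and> length u = m \<and> sorted u then 1 else 0)"

(* coefficient of Psi_I in zeta(f): Psi_I = zeta(M_u) for every packed u with WC(u) = I *)
definition Psi_coeff :: "nat list \<Rightarrow> 'k::field_char_0 wqsym \<Rightarrow> 'k poly fract" where
  "Psi_coeff I f = (\<Sum>u\<in>{u. packed u \<and> length u = sum_list I \<and> WC u = I}. f u)"

(* \<tilde>S_{j1} *_q ... *_q \<tilde>S_{jl}, whose image under zeta is S^J(q) *)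
definition SJ_lift :: "nat list \<Rightarrow> 'k::field_char_0 wqsym" where
  "SJ_lift J = foldr (\<lambda>j acc. qprod (Stilde j) acc) J wunit"

(* coefficient of Psi_I in R_J(q) = sum_{K \<succeq> J} (-1)^(l(J)-l(K)) S^K(q) *)
definition R_coeff :: "nat list \<Rightarrow> nat list \<Rightarrow> 'k::field_char_0 poly fract" where
  "R_coeff I J = (\<Sum>K\<in>{K. is_comp (sum_list J) K \<and> coarser K J}.
      (-1) ^ (length J - length K) * Psi_coeff I (SJ_lift K :: 'k wqsym))"

definition Wprime :: "nat list \<Rightarrow> nat list \<Rightarrow> nat list set" where
  "Wprime I J = {w. packed w \<and> WC w = I \<and> DC w = J}"

end

theory Submission
  imports Defs
begin

text \<open>Since a nondecreasing word has no inversions, the q-exponents in an iterated product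
  of the \<open>S\<^sub>m\<close> telescope: \<open>S\<^sub>k\<^sub>1 \<star>\<^sub>q \<dots> \<star>\<^sub>q S\<^sub>k\<^sub>l\<close> is the sum of \<open>q\<^bsup>sinv u\<^esup> M\<^sub>u\<close> over the packed
  words \<open>u\<close> that are nondecreasing on each block of \<open>K\<close>, i.e. whose descent set lies in
  \<open>Des(K)\<close>. Compositions \<open>K\<close> coarser than \<open>J\<close> correspond to subsets of \<open>Des(J)\<close>, and
  \<open>\<ell>(J) - \<ell>(K)\<close> is the difference of the sizes of the descent sets, so the alternating sum
  defining \<open>R\<^sub>J(q)\<close> is Moebius inversion on the boolean lattice of subsets of \<open>Des(J)\<close>: it keeps
  exactly the words whose descent set is \<open>Des(J)\<close>.\<close>

definition pack_rank :: "nat list \<Rightarrow> nat \<Rightarrow> nat" where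
  "pack_rank w x = card {y \<in> set w. y \<le> x}"

lemma pack_eq_map_pack_rank: "pack w = map (pack_rank w) w"
  by (simp add: pack_def pack_rank_def)

lemma length_pack [simp]: "length (pack w) = length w"
  by (simp add: pack_def)

lemma pack_rank_less:
  assumes "x \<in> set w" "x' \<in> set w" "x < x'"
  shows "pack_rank w x < pack_rank w x'"
  unfolding pack_rank_def
proof (rule psubset_card_mono)
  show "finite {y \<in> set w. y \<le> x'}" by simp
  have "x' \<in> {y \<in> set w. y \<le> x'}" "x' \<notin> {y \<in> set w. y \<le> x}" using assms by auto
  moreover have "{y \<in> set w. y \<le> x} \<subseteq> {y \<in> set w. y \<le> x'}" using assms by auto
  ultimately show "{y \<in> set w. y \<le> x} \<subset> {y \<in> set w. y \<le> x'}" by blast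
qed

lemma pack_rank_le_iff:
  assumes "x \<in> set w" "x' \<in> set w"
  shows "pack_rank w x \<le> pack_rank w x' \<longleftrightarrow> x \<le> x'"
  using pack_rank_less[OF assms] pack_rank_less[OF assms(2,1)] by (cases x x' rule: linorder_cases) auto

lemma inj_on_pack_rank: "inj_on (pack_rank w) (set w)"
  by (rule inj_onI) (metis pack_rank_le_iff order_antisym order_refl)

lemma pack_rank_in_atLeastAtMost:
  assumes "x \<in> set w"
  shows "pack_rank w x \<in> {1..card (set w)}"
proof -
  have "0 < card {y \<in> set w. y \<le> x}" using assms by (subst card_gt_0_iff) auto
  moreover have "pack_rank w x \<le> card (set w)" unfolding pack_rank_def by (rule card_mono) auto
  ultimately show ?thesis by (simp add: pack_rank_def)
qed

lemma packed_pack: "packed (pack w)"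
proof -
  have card_image: "card (pack_rank w ` set w) = card (set w)"
    by (rule card_image[OF inj_on_pack_rank])
  have "pack_rank w ` set w = {1..card (set w)}"
    by (rule card_subset_eq) (use pack_rank_in_atLeastAtMost card_image in auto)
  then show ?thesis unfolding packed_def pack_eq_map_pack_rank using card_image by simp
qed

lemma sorted_map_iff:
  assumes "\<And>x y. x \<in> set w \<Longrightarrow> y \<in> set w \<Longrightarrow> f x \<le> f y \<longleftrightarrow> x \<le> y"
  shows "sorted (map (f :: nat \<Rightarrow> nat) w) \<longleftrightarrow> sorted w"
  using assms by (simp add: sorted_iff_nth_mono)

lemma sorted_pack: "sorted (pack w) \<longleftrightarrow> sorted w"
  unfolding pack_eq_map_pack_rank by (rule sorted_map_iff) (simp add: pack_rank_le_iff)

lemma sinv_eq_0_if_sorted: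
  assumes "sorted w"
  shows "sinv w = 0"
proof -
  have "\<not> w ! j < w ! i" if "i < j" "j < length w" for i j
    using sorted_nth_mono[OF assms, of i j] that by simp
  then have no_inversions:
    "{(i, j). i < j \<and> j < length w \<and> w ! i > w ! j \<and> w ! j \<notin> set (drop (Suc j) w)} = {}"
    by blast
  show ?thesis
    unfolding sinv_def no_inversions by simp
qed

section \<open>The lifted products \<open>S\<^sup>K(q)\<close>\<close>

fun sorted_blocks :: "nat list \<Rightarrow> nat list \<Rightarrow> bool" where
  "sorted_blocks [] u \<longleftrightarrow> u = []"
| "sorted_blocks (j # K) u \<longleftrightarrow> sorted (take j u) \<and> sorted_blocks K (drop j u)"

lemma sorted_blocks_map:
  assumes "\<And>x y. x \<in> set u \<Longrightarrow> y \<in> set u \<Longrightarrow> f x \<le> f y \<longleftrightarrow> x \<le> y"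
  shows "sorted_blocks K (map (f :: nat \<Rightarrow> nat) u) \<longleftrightarrow> sorted_blocks K u"
  using assms
proof (induction K arbitrary: u)
  case Nil
  then show ?case by simp
next
  case (Cons j K)
  have "sorted (map f (take j u)) \<longleftrightarrow> sorted (take j u)"
    by (rule sorted_map_iff) (rule Cons.prems[OF in_set_takeD in_set_takeD])
  moreover have "sorted_blocks K (map f (drop j u)) \<longleftrightarrow> sorted_blocks K (drop j u)"
    by (rule Cons.IH) (rule Cons.prems[OF in_set_dropD in_set_dropD])
  ultimately show ?case by (simp add: take_map drop_map)
qed

lemma sorted_blocks_pack: "sorted_blocks K (pack u) \<longleftrightarrow> sorted_blocks K u"
  unfolding pack_eq_map_pack_rank by (rule sorted_blocks_map) (rule pack_rank_le_iff)

lemma qX_neq_0: "(qX :: 'k::field_char_0 poly fract) \<noteq> 0"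
  by (simp add: qX_def Zero_fract_def eq_fract)

lemma qprod_Stilde_apply:
  assumes "packed u" "j \<le> length u"
  shows "qprod (Stilde j) g u =
    (if sorted (take j u) then g (pack (drop j u)) *
       (qX :: 'k::field_char_0 poly fract) powi (int (sinv u) - int (sinv (pack (drop j u))))
     else 0)"
proof -
  define T where "T k = Stilde j (pack (take k u)) * g (pack (drop k u)) *
      (qX :: 'k poly fract) powi (int (sinv u) - int (sinv (pack (take k u))) - int (sinv (pack (drop k u))))"
    for k
  have "qprod (Stilde j) g u = (\<Sum>k\<in>{0..length u}. T k)"
    using assms(1) by (simp add: qprod_def T_def)
  also have "\<dots> = (\<Sum>k\<in>{0..length u}. if k = j then T j else 0)"
    by (rule sum.cong) (auto simp: T_def Stilde_def)
  also have "\<dots> = T j"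
    using assms(2) by simp
  finally show ?thesis
    using assms(2) by (simp add: T_def Stilde_def packed_pack sorted_pack sinv_eq_0_if_sorted)
qed

lemma SJ_lift_apply:
  "(SJ_lift K :: 'k::field_char_0 wqsym) u =
     (if packed u \<and> length u = sum_list K \<and> sorted_blocks K u then qX ^ sinv u else 0)"
proof (induction K arbitrary: u)
  case Nil
  show ?case by (simp add: SJ_lift_def wunit_def packed_def sinv_def)
next
  case (Cons j K)
  have unfold: "(SJ_lift (j # K) :: 'k wqsym) u = qprod (Stilde j) (SJ_lift K) u"
    by (simp add: SJ_lift_def)
  show ?case
  proof (cases "packed u \<and> j \<le> length u")
    case False
    then show ?thesis
      by (auto simp: unfold qprod_def Stilde_def intro!: sum.neutral)
  next
    case True
    then show ?thesis
      by (auto simp: unfold qprod_Stilde_apply Cons.IH packed_pack sorted_blocks_pack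
          power_int_diff qX_neq_0)
  qed
qed

section \<open>Compositions and their descent sets\<close>

lemma Des_Nil [simp]: "Des [] = {}"
  by (simp add: Des_def)

lemma Des_eq_image: "Des K = (\<lambda>k. sum_list (take k K)) ` {0<..<length K}"
  unfolding Des_def by auto

lemma finite_Des [simp]: "finite (Des K)"
  unfolding Des_eq_image by simp

lemma Des_Cons_take: "Des (j # K) = {j + sum_list (take k K) | k. k < length K}"
  unfolding Des_def
proof (intro Collect_cong iffI)
  fix x
  assume "\<exists>k. x = sum_list (take k (j # K)) \<and> 0 < k \<and> k < length (j # K)"
  then obtain k where "0 < k" "k < Suc (length K)" "x = sum_list (take k (j # K))"
    by auto
  then show "\<exists>k. x = j + sum_list (take k K) \<and> k < length K"
    by (cases k) auto
next
  fix x
  assume "\<exists>k. x = j + sum_list (take k K) \<and> k < length K"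
  then obtain k where "k < length K" "x = sum_list (take (Suc k) (j # K))"
    by auto
  then show "\<exists>k. x = sum_list (take k (j # K)) \<and> 0 < k \<and> k < length (j # K)"
    by (intro exI[of _ "Suc k"]) simp
qed

lemma Des_Cons: "Des (j # K) = (if K = [] then {} else insert j ((+) j ` Des K))"
proof (cases "K = []")
  case True
  then show ?thesis by (simp add: Des_Cons_take)
next
  case False
  have "{j + sum_list (take k K) | k. k < length K} = (\<lambda>k. j + sum_list (take k K)) ` {..<length K}"
    by auto
  also have "{..<length K} = insert 0 {0<..<length K}"
    using False by auto
  also have "(\<lambda>k. j + sum_list (take k K)) ` insert 0 {0<..<length K} = insert j ((+) j ` Des K)"
    by (simp add: Des_eq_image image_image)
  finally show ?thesis
    using False by (simp add: Des_Cons_take)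
qed

lemma sum_list_pos: "(\<forall>x\<in>set xs. 0 < (x :: nat)) \<Longrightarrow> xs \<noteq> [] \<Longrightarrow> 0 < sum_list xs"
  by (cases xs) auto

lemma Des_subset_atLeastLessThan:
  assumes "is_comp n K"
  shows "Des K \<subseteq> {1..<n}"
proof
  fix x
  assume "x \<in> Des K"
  then obtain k where k: "0 < k" "k < length K" "x = sum_list (take k K)"
    unfolding Des_def by auto
  have pos: "\<forall>x\<in>set K. 0 < x" and n: "n = sum_list (take k K) + sum_list (drop k K)"
    using assms by (simp_all add: is_comp_def flip: sum_list_append)
  have "0 < sum_list (take k K)" "0 < sum_list (drop k K)"
    using pos k by (auto intro!: sum_list_pos dest: in_set_takeD in_set_dropD)
  then show "x \<in> {1..<n}"
    using k n by auto
qed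

lemma card_Des:
  assumes "\<forall>x\<in>set K. 0 < x"
  shows "card (Des K) = length K - 1"
  using assms
proof (induction K)
  case Nil
  then show ?case by simp
next
  case (Cons j K)
  show ?case
  proof (cases "K = []")
    case True
    then show ?thesis by (simp add: Des_Cons)
  next
    case False
    have "Des K \<subseteq> {1..<sum_list K}"
      by (rule Des_subset_atLeastLessThan) (use Cons.prems in \<open>simp add: is_comp_def\<close>)
    then have "j \<notin> (+) j ` Des K"
      by auto
    then have "card (Des (j # K)) = Suc (card (Des K))"
      using False by (simp add: Des_Cons card_image)
    then show ?thesis
      using Cons False by (cases K) auto
  qed
qed

lemma length_diff_eq_card_Des_diff:
  assumes "is_comp n J" "is_comp n K"
  shows "length J - length K = card (Des J) - card (Des K)"
proof -
  have "J = [] \<longleftrightarrow> K = []"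
    using assms by (cases J; cases K) (auto simp: is_comp_def)
  then show ?thesis
    using assms card_Des[of J] card_Des[of K] by (cases J; cases K) (auto simp: is_comp_def)
qed

lemma is_comp_with_Des_exists:
  "D \<subseteq> {1..<n} \<Longrightarrow> \<exists>K. is_comp n K \<and> Des K = D"
proof (induction n arbitrary: D rule: less_induct)
  case (less n)
  show ?case
  proof (cases "D = {}")
    case True
    then show ?thesis
      by (cases "n = 0") (auto simp: is_comp_def Des_Cons intro: exI[of _ "[]"] exI[of _ "[n]"])
  next
    case False
    define m where "m = Min D"
    have fin: "finite D"
      using less.prems finite_subset by blast
    have m: "m \<in> D" "\<And>x. x \<in> D \<Longrightarrow> m \<le> x"
      using Min_in[OF fin False] Min_le[OF fin] by (simp_all add: m_def)
    have m_bounds: "1 \<le> m" "m < n"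
      using m less.prems by auto
    define D' where "D' = (\<lambda>x. x - m) ` (D - {m})"
    have D'_bounds: "D' \<subseteq> {1..<n - m}"
      using m less.prems unfolding D'_def by (force simp: le_less)
    then obtain K' where K': "is_comp (n - m) K'" "Des K' = D'"
      using less.IH[OF _ D'_bounds] m_bounds by auto
    have "K' \<noteq> []"
      using K' m_bounds by (auto simp: is_comp_def)
    have "(+) m ` D' = D - {m}"
      unfolding D'_def image_image using m(2) by (auto intro: rev_image_eqI)
    then have "Des (m # K') = D"
      using \<open>K' \<noteq> []\<close> K' m(1) by (auto simp: Des_Cons)
    moreover have "is_comp n (m # K')"
      using K' m_bounds by (auto simp: is_comp_def)
    ultimately show ?thesis by blast
  qed
qed

lemma is_comp_Des_inj:
  "is_comp n I \<Longrightarrow> is_comp n J \<Longrightarrow> Des I = Des J \<Longrightarrow> I = J"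
proof (induction I arbitrary: n J)
  case Nil
  then show ?case by (cases J) (auto simp: is_comp_def)
next
  case (Cons a I)
  obtain b J' where J: "J = b # J'"
    using Cons.prems by (cases J) (auto simp: is_comp_def)
  have DI: "Des I \<subseteq> {1..<sum_list I}"
    by (rule Des_subset_atLeastLessThan) (use Cons.prems in \<open>simp add: is_comp_def\<close>)
  have DJ: "Des J' \<subseteq> {1..<sum_list J'}"
    by (rule Des_subset_atLeastLessThan) (use Cons.prems J in \<open>simp add: is_comp_def\<close>)
  show ?case
  proof (cases "I = []")
    case True
    then have "J' = []"
      using Cons.prems J by (auto simp: Des_Cons split: if_splits)
    then show ?thesis
      using True Cons.prems J by (simp add: is_comp_def)
  next
    case False
    then have "J' \<noteq> []"
      using Cons.prems J by (auto simp: Des_Cons split: if_splits)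
    then have E: "insert a ((+) a ` Des I) = insert b ((+) b ` Des J')"
      using Cons.prems J False by (simp add: Des_Cons)
    \<comment> \<open>the first part is the least element of the descent set\<close>
    have "a \<in> insert b ((+) b ` Des J')" "b \<in> insert a ((+) a ` Des I)"
      using E by blast+
    then have "a = b \<or> b < a" "b = a \<or> a < b"
      using DI DJ by force+
    then have "a = b"
      by linarith
    moreover have "a \<notin> (+) a ` Des I" "a \<notin> (+) a ` Des J'"
      using DI DJ by auto
    ultimately have "Des I = Des J'"
      using E by (metis insert_ident inj_image_eq_iff inj_on_add)
    moreover have "is_comp (n - a) I" "is_comp (n - a) J'"
      using Cons.prems J \<open>a = b\<close> by (auto simp: is_comp_def)
    ultimately show ?thesis
      using Cons.IH J \<open>a = b\<close> by blast
  qed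
qed

lemma comp_of_set:
  assumes "D \<subseteq> {1..<n}"
  shows "is_comp n (comp_of_set n D)" "Des (comp_of_set n D) = D"
proof -
  have "\<exists>!K. is_comp n K \<and> Des K = D"
    using is_comp_with_Des_exists[OF assms] is_comp_Des_inj by blast
  then show "is_comp n (comp_of_set n D)" "Des (comp_of_set n D) = D"
    unfolding comp_of_set_def by (metis (mono_tags, lifting) theI')+
qed

lemma comp_of_set_Des:
  assumes "is_comp n K"
  shows "comp_of_set n (Des K) = K"
  unfolding comp_of_set_def by (rule the_equality) (use assms is_comp_Des_inj in auto)

lemma bij_betw_Des_coarser:
  assumes "is_comp n J"
  shows "bij_betw Des {K. is_comp n K \<and> coarser K J} (Pow (Des J))"
proof (rule bij_betw_imageI)
  show "inj_on Des {K. is_comp n K \<and> coarser K J}"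
    by (auto intro: inj_onI is_comp_Des_inj)
  have "S \<in> Des ` {K. is_comp n K \<and> coarser K J}" if "S \<subseteq> Des J" for S
    using that is_comp_with_Des_exists[of S n] Des_subset_atLeastLessThan[OF assms]
    by (force simp: coarser_def)
  then show "Des ` {K. is_comp n K \<and> coarser K J} = Pow (Des J)"
    by (auto simp: coarser_def)
qed

section \<open>Descent sets of words\<close>

definition desc_set :: "nat list \<Rightarrow> nat set" where
  "desc_set w = {p. 1 \<le> p \<and> p < length w \<and> w ! (p - 1) > w ! p}"

lemma desc_set_subset: "desc_set w \<subseteq> {1..<length w}"
  by (auto simp: desc_set_def)

lemma DC_eq: "DC w = comp_of_set (length w) (desc_set w)"
  by (simp add: DC_def desc_set_def)

lemma Des_DC: "Des (DC w) = desc_set w"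
  unfolding DC_eq by (rule comp_of_set(2)[OF desc_set_subset])

lemma DC_eq_iff:
  assumes "is_comp (length w) J"
  shows "DC w = J \<longleftrightarrow> desc_set w = Des J"
  by (metis DC_eq Des_DC comp_of_set_Des[OF assms])

lemma sum_list_WC: "sum_list (WC w) = length w"
proof -
  have "{p. 1 \<le> p \<and> p < length w \<and> w ! (p - 1) \<notin> set (drop p w)} \<subseteq> {1..<length w}"
    by auto
  from comp_of_set(1)[OF this] show ?thesis
    by (simp add: WC_def is_comp_def)
qed

lemma desc_set_drop:
  assumes "j \<le> length u"
  shows "x \<in> desc_set (drop j u) \<longleftrightarrow> 1 \<le> x \<and> j + x \<in> desc_set u"
  using assms by (cases x) (auto simp: desc_set_def)

lemma sorted_take_iff_desc_set:
  assumes "j \<le> length u"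
  shows "sorted (take j u) \<longleftrightarrow> desc_set u \<inter> {1..<j} = {}"
proof -
  have "sorted (take j u) \<longleftrightarrow> (\<forall>i. Suc i < j \<longrightarrow> u ! i \<le> u ! Suc i)"
    using assms by (simp add: sorted_iff_nth_Suc min_def)
  also have "\<dots> \<longleftrightarrow> (\<forall>p\<in>{1..<j}. u ! (p - 1) \<le> u ! p)"
  proof
    assume H: "\<forall>i. Suc i < j \<longrightarrow> u ! i \<le> u ! Suc i"
    show "\<forall>p\<in>{1..<j}. u ! (p - 1) \<le> u ! p"
    proof
      fix p
      assume "p \<in> {1..<j}"
      then obtain i where "p = Suc i" "Suc i < j"
        by (cases p) auto
      then show "u ! (p - 1) \<le> u ! p"
        using H by simp
    qed
  next
    assume H: "\<forall>p\<in>{1..<j}. u ! (p - 1) \<le> u ! p"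
    show "\<forall>i. Suc i < j \<longrightarrow> u ! i \<le> u ! Suc i"
      using H[THEN bspec, of "Suc _"] by simp
  qed
  also have "\<dots> \<longleftrightarrow> desc_set u \<inter> {1..<j} = {}"
    using assms by (auto simp: desc_set_def not_less)
  finally show ?thesis .
qed

lemma desc_set_subset_insert_iff:
  assumes "j \<le> length u"
  shows "desc_set u \<subseteq> insert j ((+) j ` D) \<longleftrightarrow>
    desc_set u \<inter> {1..<j} = {} \<and> desc_set (drop j u) \<subseteq> D"
proof
  assume "desc_set u \<subseteq> insert j ((+) j ` D)"
  then show "desc_set u \<inter> {1..<j} = {} \<and> desc_set (drop j u) \<subseteq> D"
    using desc_set_drop[OF assms] by auto
next
  assume H: "desc_set u \<inter> {1..<j} = {} \<and> desc_set (drop j u) \<subseteq> D"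
  show "desc_set u \<subseteq> insert j ((+) j ` D)"
  proof
    fix p
    assume p: "p \<in> desc_set u"
    then have "j \<le> p"
      using H desc_set_subset[of u] by fastforce
    moreover have "p - j \<in> D" if "j < p"
      using that p H desc_set_drop[OF assms, of "p - j"] by auto
    ultimately show "p \<in> insert j ((+) j ` D)"
      by (cases "p = j") (auto intro!: image_eqI[of p _ "p - j"])
  qed
qed

lemma sorted_blocks_iff_desc_set_subset:
  assumes "\<forall>x\<in>set K. 0 < x" "length u = sum_list K"
  shows "sorted_blocks K u \<longleftrightarrow> desc_set u \<subseteq> Des K"
  using assms
proof (induction K arbitrary: u)
  case Nil
  then show ?case by (simp add: desc_set_def)
next
  case (Cons j K)
  have j: "j \<le> length u"
    using Cons.prems by simp
  have IH: "sorted_blocks K (drop j u) \<longleftrightarrow> desc_set (drop j u) \<subseteq> Des K"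
    by (rule Cons.IH) (use Cons.prems in simp_all)
  show ?case
  proof (cases "K = []")
    case True
    then have "length u = j"
      using Cons.prems by simp
    then show ?thesis
      using True sorted_take_iff_desc_set[OF j] desc_set_subset[of u] by (auto simp: Des_Cons)
  next
    case False
    then show ?thesis
      using IH sorted_take_iff_desc_set[OF j] desc_set_subset_insert_iff[OF j] by (simp add: Des_Cons)
  qed
qed

lemma finite_packed_words: "finite {u. packed u \<and> length u = n \<and> P u}"
proof (rule finite_subset)
  show "{u. packed u \<and> length u = n \<and> P u} \<subseteq> {xs. set xs \<subseteq> {1..n} \<and> length xs = n}"
  proof
    fix u
    assume u: "u \<in> {u. packed u \<and> length u = n \<and> P u}"
    then have "set u \<subseteq> {1..card (set u)}" "card (set u) \<le> n"
      using card_length[of u] by (auto simp: packed_def)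
    then show "u \<in> {xs. set xs \<subseteq> {1..n} \<and> length xs = n}"
      using u by auto
  qed
  show "finite {xs. set xs \<subseteq> {1..n} \<and> length xs = n}"
    by (rule finite_lists_length_eq) simp
qed

lemma Psi_coeff_SJ_lift:
  assumes "is_comp (sum_list I) K"
  shows "Psi_coeff I (SJ_lift K :: 'k::field_char_0 wqsym) =
    (\<Sum>u | packed u \<and> length u = sum_list I \<and> WC u = I.
       if desc_set u \<subseteq> Des K then qX ^ sinv u else 0)"
  using assms unfolding Psi_coeff_def
  by (intro sum.cong) (auto simp: SJ_lift_apply sorted_blocks_iff_desc_set_subset is_comp_def)

lemma sum_Pow_alternating_indicator:
  assumes "finite B"
  shows "(\<Sum>S\<in>Pow B. (-1) ^ (card B - card S) * (\<Sum>u\<in>U. if A u \<subseteq> S then f u else 0)) =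
         (\<Sum>u\<in>U. if A u = B then f u else (0 :: 'a::comm_ring_1))"
proof -
  have mobius: "(\<Sum>S\<in>Pow B. (-1) ^ (card B - card S) * (if C \<subseteq> S then 1 else 0)) =
      (if C = B then 1 else (0 :: 'a))" for C
    using inclusion_exclusion_mobius[OF _ assms, of "\<lambda>S. if C \<subseteq> S then 1 else 0"
        "\<lambda>S. if S = C then 1 else 0"]
    by (simp add: eq_commute)
  have "(\<Sum>S\<in>Pow B. (-1) ^ (card B - card S) * (\<Sum>u\<in>U. if A u \<subseteq> S then f u else 0)) =
      (\<Sum>S\<in>Pow B. \<Sum>u\<in>U. f u * ((-1) ^ (card B - card S) * (if A u \<subseteq> S then 1 else 0)))"
    by (intro sum.cong refl) (auto simp: sum_distrib_left mult_ac intro!: sum.cong)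
  also have "\<dots> = (\<Sum>u\<in>U. f u * (\<Sum>S\<in>Pow B. (-1) ^ (card B - card S) * (if A u \<subseteq> S then 1 else 0)))"
    by (subst sum.swap) (simp only: sum_distrib_left)
  also have "\<dots> = (\<Sum>u\<in>U. if A u = B then f u else 0)"
    by (intro sum.cong refl) (simp add: mobius)
  finally show ?thesis .
qed

lemma Wprime_eq:
  assumes "is_comp n I" "is_comp n J"
  shows "Wprime I J = {u. packed u \<and> length u = n \<and> WC u = I \<and> desc_set u = Des J}"
proof -
  have "WC u = I \<Longrightarrow> length u = n" for u
    using sum_list_WC[of u] assms(1) by (auto simp: is_comp_def)
  moreover have "DC u = J \<longleftrightarrow> desc_set u = Des J" if "length u = n" for u
    using DC_eq_iff[of u J] assms(2) that by simp
  ultimately show ?thesis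
    unfolding Wprime_def by blast
qed

theorem mainTheorem10:
  fixes I J :: "nat list" and n :: nat
  assumes "is_comp n I" and "is_comp n J"
  shows "(R_coeff I J :: 'k::field_char_0 poly fract)
           = (\<Sum>w\<in>Wprime I J. (qX :: 'k poly fract) ^ sinv w)"
proof -
  define U where "U = {u. packed u \<and> length u = n \<and> WC u = I}"
  define F :: "nat set \<Rightarrow> 'k poly fract" where
    "F S = (-1) ^ (card (Des J) - card S) * (\<Sum>u\<in>U. if desc_set u \<subseteq> S then qX ^ sinv u else 0)"
    for S
  have n: "sum_list I = n" "sum_list J = n"
    using assms by (simp_all add: is_comp_def)
  have "R_coeff I J = (\<Sum>K | is_comp n K \<and> coarser K J. F (Des K))"
    unfolding R_coeff_def F_def U_def n
    by (intro sum.cong) (simp_all add: Psi_coeff_SJ_lift n length_diff_eq_card_Des_diff[OF assms(2)])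
  also have "\<dots> = (\<Sum>S\<in>Pow (Des J). F S)"
    by (rule sum.reindex_bij_betw[OF bij_betw_Des_coarser[OF assms(2)]])
  also have "\<dots> = (\<Sum>u\<in>U. if desc_set u = Des J then qX ^ sinv u else 0)"
    unfolding F_def by (rule sum_Pow_alternating_indicator) simp
  also have "\<dots> = (\<Sum>w\<in>Wprime I J. qX ^ sinv w)"
    unfolding Wprime_eq[OF assms] U_def
    by (simp add: sum.inter_filter[OF finite_packed_words, symmetric])
  finally show ?thesis .
qed

end
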